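(* Let $G$ be a finite-centre semisimple Lie group without compact factors, $X=G/K$, $x_0\in X$, $\Gamma\leq G$ a uniform lattice and $\Lambda\leq G$ a discrete subgroup with $\Gamma\cdot x_0\subset\mathcal{N}_u(\Lambda\cdot x_0)$, where $u$ is monotonically increasing with $u(r)\preceq_\infty\varepsilon r$ for some $0<\varepsilon<1$. Let $x\in X$. There exists $S=S(x,u)\in(0,1)$ such that for every $s\in(0,S)$ there is $R=R(s,S)$ such that if $r>R$ and $B=B(y,r)$ is a $\Lambda$-free ball tangent to $x$, then $sB:=B(y,sr)$ is $\Gamma$-free. In particular, the existence of arbitrarily large $\Lambda$-free balls all tangent to a fixed point $x\in X$ implies the existence of arbitrarily large $\Gamma$-free balls.
   Context: $f\preceq_\infty g$ means $\limsup f/g\leq1$. $\mathcal{N}_u(Y)=\{z: d(z,Y)\leq u(d(z,x_0))\}$. For $H\leq G$, a set $U\subset X$ is $H$-free if its topological interior does not meet $H\cdot x_0$. A ball $B(y,r)$ is tangent to $x$ if $d(x,y)=r$. *)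

theory Defs
  imports "HOL-Analysis.Analysis" "HOL-Algebra.Group"
begin

text \<open>Abstract setting: a group G (HOL-Algebra) acting by isometries on a metric space X
  (the type 'x), standing in for a semisimple Lie group acting on X = G/K.\<close>

definition isometric_action :: "('g, 'b) monoid_scheme \<Rightarrow> ('g \<Rightarrow> 'x::metric_space \<Rightarrow> 'x) \<Rightarrow> bool" where
  "isometric_action G act \<longleftrightarrow> group G \<and> act \<one>\<^bsub>G\<^esub> = id
     \<and> (\<forall>g\<in>carrier G. \<forall>h\<in>carrier G. act (g \<otimes>\<^bsub>G\<^esub> h) = act g \<circ> act h)
     \<and> (\<forall>g\<in>carrier G. \<forall>a b. dist (act g a) (act g b) = dist a b)"

definition transitive_action :: "('g, 'b) monoid_scheme \<Rightarrow> ('g \<Rightarrow> 'x \<Rightarrow> 'x) \<Rightarrow> bool" where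
  "transitive_action G act \<longleftrightarrow> (\<forall>a b. \<exists>g\<in>carrier G. act g a = b)"

definition geodesic_space :: "'x::metric_space itself \<Rightarrow> bool" where
  "geodesic_space TYPE('x) \<longleftrightarrow> (\<forall>a b::'x. \<exists>\<gamma>::real \<Rightarrow> 'x. \<gamma> 0 = a \<and> \<gamma> (dist a b) = b \<and>
      (\<forall>s\<in>{0..dist a b}. \<forall>t\<in>{0..dist a b}. dist (\<gamma> s) (\<gamma> t) = \<bar>s - t\<bar>))"

definition proper_space :: "'x::metric_space itself \<Rightarrow> bool" where
  "proper_space TYPE('x) \<longleftrightarrow> (\<forall>z::'x. \<forall>R. compact (cball z R))"

definition orbit :: "('g \<Rightarrow> 'x \<Rightarrow> 'x) \<Rightarrow> 'g set \<Rightarrow> 'x \<Rightarrow> 'x set" where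
  "orbit act H x0 = (\<lambda>g. act g x0) ` H"

text \<open>Discreteness of a subgroup H (for a proper action): its orbits are locally finite.\<close>
definition discrete_subgroup :: "('g, 'b) monoid_scheme \<Rightarrow> ('g \<Rightarrow> 'x::metric_space \<Rightarrow> 'x) \<Rightarrow> 'g set \<Rightarrow> bool" where
  "discrete_subgroup G act H \<longleftrightarrow> subgroup H G \<and>
     (\<forall>a z. \<forall>R. finite (orbit act H a \<inter> cball z R))"

text \<open>Uniform (cocompact) lattice: a discrete subgroup whose orbits are coarsely dense.\<close>
definition uniform_lattice :: "('g, 'b) monoid_scheme \<Rightarrow> ('g \<Rightarrow> 'x::metric_space \<Rightarrow> 'x) \<Rightarrow> 'g set \<Rightarrow> bool" where
  "uniform_lattice G act H \<longleftrightarrow> discrete_subgroup G act H \<and>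
     (\<forall>a. \<exists>D. \<forall>z. \<exists>p\<in>orbit act H a. dist z p \<le> D)"

definition H_free :: "('g \<Rightarrow> 'x::topological_space \<Rightarrow> 'x) \<Rightarrow> 'g set \<Rightarrow> 'x \<Rightarrow> 'x set \<Rightarrow> bool" where
  "H_free act H x0 U \<longleftrightarrow> interior U \<inter> orbit act H x0 = {}"

definition nbhd_u :: "(real \<Rightarrow> real) \<Rightarrow> 'x::metric_space \<Rightarrow> 'x set \<Rightarrow> 'x set" where
  "nbhd_u u x0 Y = {z. infdist z Y \<le> u (dist z x0)}"

definition asymp_le :: "(real \<Rightarrow> real) \<Rightarrow> (real \<Rightarrow> real) \<Rightarrow> bool" where
  "asymp_le f g \<longleftrightarrow> Limsup at_top (\<lambda>t. ereal (f t / g t)) \<le> 1"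

end

theory Submission
  imports Defs
begin

text \<open>A point z of \<Gamma>\<cdot>x0 lies within u(d(z,x0)) of \<Lambda>\<cdot>x0, and u grows at most like e\<cdot>t with
  e slightly above \<epsilon>. If z lay in B(y,sr), where B(y,r) is tangent to x, then d(z,x0) \<le> (1+s)r + d(x,x0),
  so some point of \<Lambda>\<cdot>x0 would lie within sr + e((1+s)r + d(x,x0)) of y. For s < (1-\<epsilon>)/(1+\<epsilon>)
  and r large this is less than r, contradicting that B(y,r) is \<Lambda>-free.\<close>

lemma infdist_less_imp_ex_dist_less:
  fixes x :: "'x::metric_space"
  assumes "A \<noteq> {}" "infdist x A < d"
  shows "\<exists>a\<in>A. dist x a < d"
  using assms by (simp add: infdist_notempty cINF_less_iff)

lemma asymp_le_linear_imp_eventually_le: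
  fixes u :: "real \<Rightarrow> real"
  assumes "asymp_le u (\<lambda>t. \<epsilon> * t)" "0 < \<epsilon>" "\<epsilon> < e"
  shows "eventually (\<lambda>t. u t \<le> e * t) at_top"
proof -
  have "Limsup at_top (\<lambda>t. ereal (u t / (\<epsilon> * t))) < ereal (e / \<epsilon>)"
    using assms by (auto simp: asymp_le_def one_ereal_def intro: order_le_less_trans)
  then have "eventually (\<lambda>t. u t / (\<epsilon> * t) < e / \<epsilon>) at_top"
    by (auto dest: Limsup_lessD)
  moreover have "eventually (\<lambda>t::real. 0 < t) at_top"
    by (rule eventually_gt_at_top)
  ultimately show ?thesis
  proof eventually_elim
    case (elim t)
    then have "u t / (\<epsilon> * t) * (\<epsilon> * t) \<le> e / \<epsilon> * (\<epsilon> * t)"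
      using \<open>0 < \<epsilon>\<close> by (intro mult_right_mono) auto
    then show ?case
      using \<open>0 < \<epsilon>\<close> \<open>0 < t\<close> by simp
  qed
qed

lemma tangent_ball_free_imp_small_ball_disjoint:
  fixes L P :: "'x::metric_space set" and u :: "real \<Rightarrow> real"
  assumes "L \<noteq> {}" "P \<subseteq> nbhd_u u x0 L" "mono u"
    and linear_bound: "\<And>t. t \<ge> T \<Longrightarrow> u t \<le> e * t"
    and "interior (cball y r) \<inter> L = {}" "dist x y = r"
    and "0 \<le> s" "T \<le> r" and gap: "s * r + e * ((1 + s) * r + dist x x0) < r"
  shows "cball y (s * r) \<inter> P = {}"
proof (rule ccontr)
  assume "cball y (s * r) \<inter> P \<noteq> {}"
  then obtain z where zy: "dist y z \<le> s * r" and "z \<in> P"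
    by auto
  have "dist z x0 \<le> dist z y + dist y x + dist x x0"
    using dist_triangle[of z x0 y] dist_triangle[of y x0 x] by linarith
  then have z_x0: "dist z x0 \<le> (1 + s) * r + dist x x0"
    using zy \<open>dist x y = r\<close> by (simp add: dist_commute algebra_simps)
  have "infdist z L \<le> u (dist z x0)"
    using \<open>z \<in> P\<close> \<open>P \<subseteq> nbhd_u u x0 L\<close> by (auto simp: nbhd_u_def)
  also have "\<dots> \<le> u ((1 + s) * r + dist x x0)"
    using \<open>mono u\<close> z_x0 by (rule monoD)
  also have "\<dots> \<le> e * ((1 + s) * r + dist x x0)"
  proof (rule linear_bound)
    have "0 \<le> s * r"
      using \<open>0 \<le> s\<close> \<open>dist x y = r\<close> by auto
    then show "T \<le> (1 + s) * r + dist x x0"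
      using \<open>T \<le> r\<close> zero_le_dist[of x x0] unfolding distrib_right by linarith
  qed
  finally have "infdist z L < r - s * r"
    using gap by linarith
  then obtain p where "p \<in> L" and "dist z p < r - s * r"
    using infdist_less_imp_ex_dist_less[OF \<open>L \<noteq> {}\<close>] by blast
  then have "p \<in> ball y r"
    using zy dist_triangle[of y p z] by simp
  then have "p \<in> interior (cball y r)"
    using interior_maximal[OF ball_subset_cball open_ball] by blast
  with \<open>p \<in> L\<close> \<open>interior (cball y r) \<inter> L = {}\<close> show False
    by blast
qed

lemma tangent_free_balls_shrink:
  fixes L P :: "'x::metric_space set" and u :: "real \<Rightarrow> real"
  assumes "L \<noteq> {}" "P \<subseteq> nbhd_u u x0 L" "mono u"
    and "0 < \<epsilon>" "\<epsilon> < 1" "asymp_le u (\<lambda>t. \<epsilon> * t)"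
    and "0 < s" "s < (1 - \<epsilon>) / (1 + \<epsilon>)"
  shows "\<exists>R. \<forall>r>R. \<forall>y. interior (cball y r) \<inter> L = {} \<and> dist x y = r
           \<longrightarrow> cball y (s * r) \<inter> P = {}"
proof -
  define q where "q = (1 - s) / (1 + s)"
  have "\<epsilon> < q"
    using assms(4,7,8) by (simp add: q_def field_simps)
  define e where "e = (\<epsilon> + q) / 2"
  have "\<epsilon> < e" and "e < q"
    using \<open>\<epsilon> < q\<close> by (simp_all add: e_def)
  define a where "a = 1 - s - e * (1 + s)"
  have "0 < a"
    using \<open>e < q\<close> \<open>0 < s\<close> by (simp add: a_def q_def field_simps)
  obtain T where T: "\<And>t. t \<ge> T \<Longrightarrow> u t \<le> e * t"
    using asymp_le_linear_imp_eventually_le[OF assms(6,4) \<open>\<epsilon> < e\<close>]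
    by (auto simp: eventually_at_top_linorder)
  show ?thesis
  proof (intro exI allI impI)
    fix r y
    assume r: "max T (e * dist x x0 / a) < r"
      and "interior (cball y r) \<inter> L = {} \<and> dist x y = r"
    then have free: "interior (cball y r) \<inter> L = {}" and tangent: "dist x y = r"
      by auto
    have "s * r + e * ((1 + s) * r + dist x x0) < r"
      using r \<open>0 < a\<close> by (simp add: a_def field_simps)
    then show "cball y (s * r) \<inter> P = {}"
      using r \<open>0 < s\<close>
      by (intro tangent_ball_free_imp_small_ball_disjoint[OF assms(1-3) T free tangent]) auto
  qed
qed

theorem lemma5p6:
  fixes G :: "('g, 'b) monoid_scheme"
    and act :: "'g \<Rightarrow> 'x::metric_space \<Rightarrow> 'x"
    and \<Gamma> \<Lambda> :: "'g set"
    and x0 x :: 'x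
    and u :: "real \<Rightarrow> real"
    and \<epsilon> :: real
  assumes "isometric_action G act"
    and "transitive_action G act"
    and "geodesic_space TYPE('x)"
    and "proper_space TYPE('x)"
    and "uniform_lattice G act \<Gamma>"
    and "discrete_subgroup G act \<Lambda>"
    and "orbit act \<Gamma> x0 \<subseteq> nbhd_u u x0 (orbit act \<Lambda> x0)"
    and "mono u"
    and "0 < \<epsilon>" and "\<epsilon> < 1"
    and "asymp_le u (\<lambda>r. \<epsilon> * r)"
  shows "(\<exists>S\<in>{0<..<1}. \<forall>s\<in>{0<..<S}. \<exists>R. \<forall>r>R. \<forall>y.
            H_free act \<Lambda> x0 (cball y r) \<and> dist x y = r
              \<longrightarrow> H_free act \<Gamma> x0 (cball y (s * r)))
       \<and> ((\<forall>R. \<exists>r>R. \<exists>y. H_free act \<Lambda> x0 (cball y r) \<and> dist x y = r)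
              \<longrightarrow> (\<forall>R. \<exists>r>R. \<exists>y. H_free act \<Gamma> x0 (cball y r)))"
proof -
  define S where "S = (1 - \<epsilon>) / (1 + \<epsilon>)"
  have "S \<in> {0<..<1}"
    using \<open>0 < \<epsilon>\<close> \<open>\<epsilon> < 1\<close> by (simp add: S_def field_simps)
  have "orbit act \<Lambda> x0 \<noteq> {}"
    using \<open>discrete_subgroup G act \<Lambda>\<close>
    by (auto simp: discrete_subgroup_def orbit_def dest: subgroup.one_closed)
  then have shrink: "\<exists>R. \<forall>r>R. \<forall>y. H_free act \<Lambda> x0 (cball y r) \<and> dist x y = r
                       \<longrightarrow> H_free act \<Gamma> x0 (cball y (s * r))" if "s \<in> {0<..<S}" for s
  proof -
    have "0 < s" "s < (1 - \<epsilon>) / (1 + \<epsilon>)"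
      using that by (auto simp: S_def)
    from tangent_free_balls_shrink[OF \<open>orbit act \<Lambda> x0 \<noteq> {}\<close> assms(7-11) this]
    show ?thesis
      unfolding H_free_def using interior_subset by blast
  qed
  moreover have "\<exists>r>R0. \<exists>y. H_free act \<Gamma> x0 (cball y r)"
    if large: "\<forall>R. \<exists>r>R. \<exists>y. H_free act \<Lambda> x0 (cball y r) \<and> dist x y = r" for R0
  proof -
    obtain R where R: "\<And>r y. r > R \<Longrightarrow> H_free act \<Lambda> x0 (cball y r) \<and> dist x y = r
                         \<Longrightarrow> H_free act \<Gamma> x0 (cball y (S / 2 * r))"
      using shrink[of "S / 2"] \<open>S \<in> {0<..<1}\<close> by auto
    obtain r y where "r > max R (2 * R0 / S)" "H_free act \<Lambda> x0 (cball y r) \<and> dist x y = r"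
      using large by blast
    then show ?thesis
      using R \<open>S \<in> {0<..<1}\<close> by (intro exI[of _ "S / 2 * r"]) (auto simp: field_simps)
  qed
  ultimately show ?thesis
    using \<open>S \<in> {0<..<1}\<close> by blast
qed

end
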